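(* Let $m\geq1$ and $c$ be integers with $0<c<m$ and $2c\neq m$. Then for all integers $n\geq0$, $$p^c_m(n)+\sum_{j\geq1}(-1)^j\left(p^c_m\!\left(n-\tfrac{mj^2+(m-2c)j}{2}\right)+p^c_m\!\left(n-\tfrac{mj^2-(m-2c)j}{2}\right)\right)=\begin{cases}1,&\text{if } n=m\,\frac{j(3j-1)}{2}\text{ for some even } j\in\mathbb{Z},\\-1,&\text{if } n=m\,\frac{j(3j-1)}{2}\text{ for some odd } j\in\mathbb{Z},\\0,&\text{otherwise,}\end{cases}$$ i.e. $p^c_m(n)-p^c_m(n-(m-c))-p^c_m(n-c)+p^c_m(n-(3m-2c))+p^c_m(n-(m+2c))-\cdots$ equals the right-hand side above.
   Context: $p^c_m(n)$ denotes the number of partitions of $n$ all of whose parts are congruent to $c$ or $-c$ modulo $m$, with $p^c_m(0)=1$ and $p^c_m(k)=0$ for $k<0$; its generating function is $\prod_{k\ge1}\frac{1}{(1-q^{mk-c})(1-q^{mk-(m-c)})}$. The numbers $j(3j-1)/2$, $j\in\mathbb{Z}$, are the (generalized) pentagonal numbers, which are distinct for distinct $j$. *)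

theory Defs
  imports Main "HOL-Library.Multiset"
begin

definition partitions_pm :: "int \<Rightarrow> int \<Rightarrow> nat \<Rightarrow> nat multiset set" where
  "partitions_pm m c n = {P. sum_mset P = n \<and>
      (\<forall>x \<in># P. 0 < x \<and> (int x mod m = c mod m \<or> int x mod m = (- c) mod m))}"

definition pcm :: "int \<Rightarrow> int \<Rightarrow> int \<Rightarrow> int" where
  "pcm m c k = (if k < 0 then 0 else int (card (partitions_pm m c (nat k))))"

end

theory Submission
  imports Defs "HOL-Computational_Algebra.Formal_Power_Series"
begin

text \<open>
  The generating function of p^c_m is 1/P with P = prod_k (1 - q^(mk - c)) (1 - q^(mk - m + c));
  the two families of exponents are disjoint because 2c \<noteq> m. By the Jacobi triple product,
  (q^m; q^m)_inf P = sum_j (-1)^j q^((m j^2 + (m - 2c) j)/2), so the left-hand side of the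
  theorem is the n-th coefficient of (q^m; q^m)_inf. The same identity for the pair (3m, m) is
  Euler's pentagonal number theorem in q^m, whose n-th coefficient is the right-hand side.

  Infinite products are avoided by comparing coefficients up to degree N only: the finite
  triple product follows from the q-binomial theorem, and modulo q^(N+1) the product
  (q^m; q^m)_n no longer depends on n \<ge> N.
\<close>

unbundle fps_syntax

section \<open>Gaussian binomial coefficients\<close>

fun gauss_binom :: "'a::comm_ring_1 \<Rightarrow> nat \<Rightarrow> nat \<Rightarrow> 'a" where
  "gauss_binom x n 0 = 1"
| "gauss_binom x 0 (Suc k) = 0"
| "gauss_binom x (Suc n) (Suc k) = gauss_binom x n (Suc k) + x ^ (n - k) * gauss_binom x n k"

lemma gauss_binom_eq_0: "n < k \<Longrightarrow> gauss_binom x n k = 0"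
  by (induction x n k rule: gauss_binom.induct) auto

lemma gauss_binom_diag [simp]: "gauss_binom x n n = 1"
  by (induction n) (simp_all add: gauss_binom_eq_0)

definition qpoch :: "'a::comm_ring_1 \<Rightarrow> nat \<Rightarrow> 'a" where
  "qpoch x n = (\<Prod>i=1..n. 1 - x ^ i)"

lemma qpoch_0 [simp]: "qpoch x 0 = 1"
  by (simp add: qpoch_def)

lemma qpoch_Suc: "qpoch x (Suc n) = qpoch x n * (1 - x ^ Suc n)"
  by (simp add: qpoch_def prod.nat_ivl_Suc')

lemma gauss_binom_mult_qpoch:
  "k \<le> n \<Longrightarrow> gauss_binom x n k * qpoch x k * qpoch x (n - k) = qpoch x n"
proof (induction x n k rule: gauss_binom.induct)
  case (3 x n k)
  show ?case
  proof (cases "k = n")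
    case True
    then show ?thesis by (simp add: gauss_binom_eq_0 qpoch_Suc)
  next
    case False
    with "3.prems" have "Suc k \<le> n" by simp
    then have "qpoch x (n - k) = qpoch x (n - Suc k) * (1 - x ^ (n - k))"
      by (metis Suc_diff_Suc Suc_le_lessD qpoch_Suc)
    then have first: "gauss_binom x n (Suc k) * qpoch x (Suc k) * qpoch x (n - k)
        = qpoch x n * (1 - x ^ (n - k))"
      using "3.IH"(1) \<open>Suc k \<le> n\<close> by (simp flip: mult.assoc)
    have "gauss_binom x n k * qpoch x (Suc k) * qpoch x (n - k)
        = gauss_binom x n k * qpoch x k * qpoch x (n - k) * (1 - x ^ Suc k)"
      by (simp add: qpoch_Suc[of x k] ac_simps)
    then have second: "gauss_binom x n k * qpoch x (Suc k) * qpoch x (n - k)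
        = qpoch x n * (1 - x ^ Suc k)"
      using "3.IH"(2) \<open>Suc k \<le> n\<close> by simp
    have "gauss_binom x (Suc n) (Suc k) * qpoch x (Suc k) * qpoch x (Suc n - Suc k)
        = gauss_binom x n (Suc k) * qpoch x (Suc k) * qpoch x (n - k)
          + x ^ (n - k) * (gauss_binom x n k * qpoch x (Suc k) * qpoch x (n - k))"
      by (simp add: algebra_simps)
    also have "\<dots> = qpoch x n * (1 - x ^ (n - k)) + x ^ (n - k) * (qpoch x n * (1 - x ^ Suc k))"
      unfolding first second ..
    also have "\<dots> = qpoch x n * (1 - x ^ (n - k) * x ^ Suc k)"
      by (simp add: algebra_simps)
    also have "x ^ (n - k) * x ^ Suc k = x ^ Suc n"
      using \<open>Suc k \<le> n\<close> by (metis Suc_le_lessD add_Suc_right le_add_diff_inverse2 less_imp_le power_add)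
    finally show ?thesis by (simp add: qpoch_Suc)
  qed
qed simp_all

lemma Suc_choose_two: "Suc k choose 2 = (k choose 2) + k"
  by (simp add: numeral_2_eq_2)

theorem q_binomial:
  "(\<Prod>i<n. w + y * x ^ i) = (\<Sum>k\<le>n. x ^ (k choose 2) * gauss_binom x n k * y ^ k * w ^ (n - k))"
proof (induction n)
  case (Suc n)
  let ?t = "\<lambda>k. x ^ (k choose 2) * gauss_binom x n k * y ^ k"
  have shifted: "x ^ (n - k) * x ^ (Suc k choose 2) = x ^ n * x ^ (k choose 2)" if "k \<le> n" for k
  proof -
    have "n - k + (Suc k choose 2) = n + (k choose 2)"
      using that by (simp add: Suc_choose_two)
    then show ?thesis by (metis power_add)
  qed
  have "(\<Prod>i<Suc n. w + y * x ^ i) = (\<Sum>k\<le>n. ?t k * w ^ (n - k)) * (w + y * x ^ n)"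
    using Suc.IH by simp
  also have "\<dots> = (\<Sum>k\<le>n. ?t k * w ^ (Suc n - k)) + (\<Sum>k\<le>n. ?t k * w ^ (n - k) * (y * x ^ n))"
    unfolding sum_distrib_right sum.distrib[symmetric]
    by (intro sum.cong refl) (simp add: Suc_diff_le algebra_simps)
  also have "(\<Sum>k\<le>n. ?t k * w ^ (Suc n - k)) = (\<Sum>k\<le>Suc n. ?t k * w ^ (Suc n - k))"
    by (simp add: gauss_binom_eq_0)
  also have "\<dots> = w ^ Suc n + (\<Sum>k\<le>n. ?t (Suc k) * w ^ (n - k))"
    by (subst sum.atMost_Suc_shift) (simp add: binomial_eq_0)
  also have "(\<Sum>k\<le>n. ?t k * w ^ (n - k) * (y * x ^ n))
      = (\<Sum>k\<le>n. x ^ (n - k) * x ^ (Suc k choose 2) * gauss_binom x n k * y ^ Suc k * w ^ (n - k))"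
    by (intro sum.cong refl) (simp add: shifted ac_simps)
  also have "w ^ Suc n + (\<Sum>k\<le>n. ?t (Suc k) * w ^ (n - k))
      + (\<Sum>k\<le>n. x ^ (n - k) * x ^ (Suc k choose 2) * gauss_binom x n k * y ^ Suc k * w ^ (n - k))
      = (\<Sum>k\<le>Suc n. x ^ (k choose 2) * gauss_binom x (Suc n) k * y ^ k * w ^ (Suc n - k))"
    by (subst sum.atMost_Suc_shift) (simp add: sum.distrib binomial_eq_0 algebra_simps)
  finally show ?case .
qed (simp add: binomial_eq_0)

section \<open>Power series agreeing up to a given degree\<close>

definition fps_eq_upto :: "nat \<Rightarrow> 'a::zero fps \<Rightarrow> 'a fps \<Rightarrow> bool" where
  "fps_eq_upto N f g \<longleftrightarrow> (\<forall>i\<le>N. f $ i = g $ i)"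

lemma fps_eq_upto_refl [simp]: "fps_eq_upto N f f"
  by (simp add: fps_eq_upto_def)

lemma fps_eq_upto_sym: "fps_eq_upto N f g \<Longrightarrow> fps_eq_upto N g f"
  by (simp add: fps_eq_upto_def)

lemma fps_eq_upto_trans [trans]: "fps_eq_upto N f g \<Longrightarrow> fps_eq_upto N g h \<Longrightarrow> fps_eq_upto N f h"
  by (simp add: fps_eq_upto_def)

lemma fps_eq_upto_mult:
  fixes f g f' g' :: "'a::comm_semiring_1 fps"
  shows "fps_eq_upto N f g \<Longrightarrow> fps_eq_upto N f' g' \<Longrightarrow> fps_eq_upto N (f * f') (g * g')"
  unfolding fps_eq_upto_def fps_mult_nth by (auto intro!: sum.cong)

lemma fps_eq_upto_sum:
  "(\<And>k. k \<in> A \<Longrightarrow> fps_eq_upto N (f k) (g k)) \<Longrightarrow> fps_eq_upto N (sum f A) (sum g A)"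
  unfolding fps_eq_upto_def fps_sum_nth by (auto intro!: sum.cong)

lemma fps_eq_upto_X_power_mult:
  fixes h :: "'a::comm_semiring_1 fps"
  shows "N < e \<Longrightarrow> fps_eq_upto N (fps_X ^ e * h) 0"
  by (simp add: fps_eq_upto_def fps_X_power_mult_nth)

lemma fps_eq_upto_cancel:
  fixes f g h :: "'a::idom fps"
  assumes "f $ 0 \<noteq> 0" and "fps_eq_upto N (f * g) (f * h)"
  shows "fps_eq_upto N g h"
  unfolding fps_eq_upto_def
proof (intro allI impI)
  fix i assume "i \<le> N"
  then show "g $ i = h $ i"
  proof (induction i rule: less_induct)
    case (less i)
    have "0 = (f * (g - h)) $ i"
      using assms(2) \<open>i \<le> N\<close> by (simp add: fps_eq_upto_def algebra_simps)
    also have "\<dots> = f $ 0 * (g - h) $ i + (\<Sum>j=1..i. f $ j * (g - h) $ (i - j))"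
      by (simp add: fps_mult_nth sum.atLeast_Suc_atMost)
    also have "(\<Sum>j=1..i. f $ j * (g - h) $ (i - j)) = 0"
      using less.IH less.prems by (intro sum.neutral) auto
    finally show ?case
      using assms(1) by simp
  qed
qed

lemma minus_one_power_mult_nth: "((-1) ^ k * f) $ n = (-1) ^ k * f $ n"
  for f :: "'a::comm_ring_1 fps"
proof (induction k)
  case (Suc k)
  have "(-1) ^ Suc k * f = - ((-1) ^ k * f)"
    by simp
  with Suc show ?case
    by simp
qed simp

lemma qpoch_X_power_eq_upto:
  assumes "m \<ge> 1" and "N \<le> n"
  shows "fps_eq_upto N (qpoch (fps_X ^ m :: 'a::comm_ring_1 fps) n) (qpoch (fps_X ^ m) N)"
  using assms(2)
proof (induction n rule: dec_induct)
  case (step n)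
  have "N < m * Suc n"
    using assms(1) step.hyps(1) by (metis le_imp_less_Suc less_le_trans mult_1 mult_le_mono1)
  moreover have "fps_eq_upto N (1 - fps_X ^ e) (1 :: 'a fps)" if "N < e" for e
    using that by (auto simp: fps_eq_upto_def)
  ultimately have "fps_eq_upto N (1 - (fps_X ^ m) ^ Suc n) (1 :: 'a fps)"
    by (metis power_mult)
  from fps_eq_upto_mult[OF step.IH this] show ?case
    by (simp add: qpoch_Suc)
qed simp

lemma qpoch_X_power_nth_0 [simp]: "m \<ge> 1 \<Longrightarrow> qpoch (fps_X ^ m :: 'a::comm_ring_1 fps) n $ 0 = 1"
  by (induction n) (simp_all add: qpoch_Suc)

lemma qpoch_gauss_binom_eq_upto:
  assumes "m \<ge> 1" and "k \<le> n" and "N \<le> k" and "N \<le> n - k"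
  shows "fps_eq_upto N (qpoch (fps_X ^ m :: 'a::idom fps) n * gauss_binom (fps_X ^ m) n k) 1"
proof -
  define A :: "'a fps" where "A = qpoch (fps_X ^ m) N"
  have A0: "A $ 0 \<noteq> 0"
    using assms(1) by (simp add: A_def)
  have trunc: "fps_eq_upto N (qpoch (fps_X ^ m) i) A" if "N \<le> i" for i
    unfolding A_def using assms(1) that by (rule qpoch_X_power_eq_upto)
  let ?Q = "\<lambda>i. qpoch (fps_X ^ m :: 'a fps) i"
  let ?P = "?Q n * gauss_binom (fps_X ^ m) n k"
  have "A * (A * ?P) = ?P * (A * A)"
    by (simp only: ac_simps)
  also have "fps_eq_upto N \<dots> (?P * (?Q k * ?Q (n - k)))"
    using assms by (intro fps_eq_upto_mult fps_eq_upto_refl fps_eq_upto_sym[OF trunc])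
  also have "?P * (?Q k * ?Q (n - k)) = ?Q n * ?Q n"
    using gauss_binom_mult_qpoch[OF assms(2), of "fps_X ^ m"] by (metis mult.assoc)
  also have "fps_eq_upto N \<dots> (A * (A * 1))"
    using assms by (simp add: fps_eq_upto_mult trunc)
  finally have "fps_eq_upto N (A * (A * ?P)) (A * (A * 1))" .
  then show ?thesis
    using A0 by (blast intro: fps_eq_upto_cancel)
qed

section \<open>The Jacobi triple product\<close>

lemma two_times_choose_two: "2 * int (k choose 2) = int k * (int k - 1)"
  by (induction k) (simp_all add: Suc_choose_two algebra_simps)

lemma sum_lessThan_eq_choose_two: "(\<Sum>i<n. i) = n choose 2"
  by (induction n) (simp_all add: Suc_choose_two)

text \<open>The exponent (m j^2 + (m - 2c) j)/2 of the theta series. For 0 < c < m its numerator is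
  even and at least 2|j|, so neither \<open>div\<close> nor \<open>nat\<close> loses anything.\<close>

definition theta_exp :: "nat \<Rightarrow> nat \<Rightarrow> int \<Rightarrow> nat" where
  "theta_exp m c j = nat ((int m * j\<^sup>2 + (int m - 2 * int c) * j) div 2)"

lemma theta_exp_numerator_bound:
  assumes "0 < c" and "c < m"
  shows "2 * \<bar>j\<bar> \<le> int m * j\<^sup>2 + (int m - 2 * int c) * j"
proof -
  have "(2 - int m) * \<bar>j\<bar> \<le> (int m - 2 * int c) * j"
  proof (cases "j \<ge> 0")
    case True
    have "2 - int m \<le> int m - 2 * int c" using assms by simp
    then show ?thesis using True by (simp add: mult_right_mono)
  next
    case False
    then have "(int m - 2 * int c) * j = (2 * int c - int m) * \<bar>j\<bar>" by (simp add: algebra_simps)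
    moreover have "2 - int m \<le> 2 * int c - int m" using assms by simp
    ultimately show ?thesis by (simp add: mult_right_mono)
  qed
  then have "2 * \<bar>j\<bar> - int m * \<bar>j\<bar> \<le> (int m - 2 * int c) * j"
    by (simp add: left_diff_distrib)
  moreover have "0 \<le> \<bar>j\<bar> * (\<bar>j\<bar> - 1)"
  proof (cases "j = 0")
    case False
    then have "1 \<le> \<bar>j\<bar>" by linarith
    then show ?thesis by simp
  qed simp
  then have "0 \<le> int m * (\<bar>j\<bar> * (\<bar>j\<bar> - 1))"
    by simp
  moreover have "j\<^sup>2 = \<bar>j\<bar> * \<bar>j\<bar>"
    by (simp add: power2_eq_square)
  then have "int m * j\<^sup>2 = int m * (\<bar>j\<bar> * (\<bar>j\<bar> - 1)) + int m * \<bar>j\<bar>"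
    by (simp only:) (simp add: algebra_simps)
  ultimately show ?thesis
    by linarith
qed

lemma two_theta_exp:
  assumes "0 < c" and "c < m"
  shows "2 * int (theta_exp m c j) = int m * j\<^sup>2 + (int m - 2 * int c) * j"
proof -
  have "int m * j\<^sup>2 + (int m - 2 * int c) * j = int m * (j * (j + 1)) - 2 * (int c * j)"
    by (simp add: algebra_simps power2_eq_square)
  then have "even (int m * j\<^sup>2 + (int m - 2 * int c) * j)"
    by simp
  then obtain t where t: "int m * j\<^sup>2 + (int m - 2 * int c) * j = 2 * t"
    by (rule evenE)
  moreover have "0 \<le> t"
    using theta_exp_numerator_bound[OF assms, of j] t by linarith
  moreover have "theta_exp m c j = nat t"
    unfolding theta_exp_def t by simp
  ultimately show ?thesis
    by (simp only: t)
qed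

lemma abs_le_theta_exp: "0 < c \<Longrightarrow> c < m \<Longrightarrow> \<bar>j\<bar> \<le> int (theta_exp m c j)"
  using theta_exp_numerator_bound[of c m j] two_theta_exp[of c m j] by linarith

lemma theta_exp_0 [simp]: "theta_exp m c 0 = 0"
  by (simp add: theta_exp_def)

lemma theta_exp_shift:
  assumes "0 < c" and "c < m" and "k \<le> 2 * n" and "c \<le> m * n"
  shows "m * (k choose 2) + (m * n - c) * (2 * n - k)
       = m * (n choose 2) + (m * n - c) * n + theta_exp m c (int n - int k)"
proof -
  define a b e where "a = int (k choose 2)" and "b = int (n choose 2)"
    and "e = int (theta_exp m c (int n - int k))"
  have "2 * a = int k * (int k - 1)" "2 * b = int n * (int n - 1)"
    "2 * e = int m * (int n - int k)\<^sup>2 + (int m - 2 * int c) * (int n - int k)"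
    unfolding a_def b_def e_def by (simp_all only: two_times_choose_two two_theta_exp[OF assms(1,2)])
  then have "2 * (int m * a + (int m * int n - int c) * (2 * int n - int k))
      = 2 * (int m * b + (int m * int n - int c) * int n + e)"
    by algebra
  then have "int m * a + (int m * int n - int c) * (2 * int n - int k)
      = int m * b + (int m * int n - int c) * int n + e"
    by simp
  then have "int (m * (k choose 2) + (m * n - c) * (2 * n - k))
      = int (m * (n choose 2) + (m * n - c) * n + theta_exp m c (int n - int k))"
    unfolding a_def b_def e_def using assms by (simp add: of_nat_diff)
  then show ?thesis
    by (simp only: of_nat_eq_iff)
qed

lemma prod_lessThan_add: "(\<Prod>i<a + b. f i) = (\<Prod>i<a. f i) * (\<Prod>i<b. f (i + a))"
  for f :: "nat \<Rightarrow> 'a::comm_monoid_mult"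
proof -
  have "(\<Prod>i<a + b. f i) = (\<Prod>i=0..<a. f i) * (\<Prod>i=a..<b + a. f i)"
    by (simp add: prod.atLeastLessThan_concat add.commute flip: atLeast0LessThan)
  also have "(\<Prod>i=a..<b + a. f i) = (\<Prod>i<b. f (i + a))"
    using prod.shift_bounds_nat_ivl[of f 0 a b] by (simp add: atLeast0LessThan)
  finally show ?thesis
    by (simp add: atLeast0LessThan)
qed

lemma prod_lower_half:
  fixes x :: "'a::comm_ring_1"
  assumes "c \<le> m"
  shows "(\<Prod>i<n. x ^ (m * i) - x ^ (m * n - c)) = x ^ (m * (n choose 2)) * (\<Prod>k=1..n. 1 - x ^ (m * k - c))"
proof -
  have "(\<Prod>i<n. x ^ (m * i) - x ^ (m * n - c)) = (\<Prod>i<n. x ^ (m * i) * (1 - x ^ (m * (n - i) - c)))"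
  proof (rule prod.cong[OF refl])
    fix i assume "i \<in> {..<n}"
    then have "1 \<le> n - i" and "i + (n - i) = n"
      by simp_all
    then have "m \<le> m * (n - i)" and "m * i + m * (n - i) = m * n"
      by (metis mult_le_mono2 mult_1_right, metis add_mult_distrib2)
    then have "m * n - c = m * i + (m * (n - i) - c)"
      using assms by linarith
    then show "x ^ (m * i) - x ^ (m * n - c) = x ^ (m * i) * (1 - x ^ (m * (n - i) - c))"
      unfolding right_diff_distrib by (simp only: power_add mult_1_right)
  qed
  also have "\<dots> = (\<Prod>i<n. x ^ (m * i)) * (\<Prod>i<n. 1 - x ^ (m * Suc (n - Suc i) - c))"
    by (simp add: prod.distrib Suc_diff_Suc)
  also have "(\<Prod>i<n. x ^ (m * i)) = x ^ (\<Sum>i<n. m * i)"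
    by (simp add: power_sum)
  also have "(\<Sum>i<n. m * i) = m * (n choose 2)"
    by (simp add: sum_lessThan_eq_choose_two flip: sum_distrib_left)
  also have "(\<Prod>i<n. 1 - x ^ (m * Suc (n - Suc i) - c)) = (\<Prod>i<n. 1 - x ^ (m * Suc i - c))"
    by (rule prod.nat_diff_reindex[where g = "\<lambda>i. 1 - x ^ (m * Suc i - c)"])
  also have "\<dots> = (\<Prod>k=1..n. 1 - x ^ (m * k - c))"
    by (simp only: One_nat_def prod.atLeast1_atMost_eq)
  finally show ?thesis .
qed

lemma prod_upper_half:
  fixes x :: "'a::comm_ring_1"
  assumes "c \<le> m"
  shows "(\<Prod>i<n. x ^ (m * (i + n)) - x ^ (m * n - c))
       = (- (x ^ (m * n - c))) ^ n * (\<Prod>k=1..n. 1 - x ^ (m * k - (m - c)))"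
proof -
  have "(\<Prod>i<n. x ^ (m * (i + n)) - x ^ (m * n - c))
      = (\<Prod>i<n. (- (x ^ (m * n - c))) * (1 - x ^ (m * Suc i - (m - c))))"
  proof (rule prod.cong[OF refl])
    fix i assume "i \<in> {..<n}"
    then have "m \<le> m * n"
      by simp
    moreover have "m * Suc i - (m - c) = m * i + c" and "m * (i + n) = m * i + m * n"
      using assms by (simp_all add: add_mult_distrib2)
    ultimately have "m * (i + n) = (m * n - c) + (m * Suc i - (m - c))"
      using assms by linarith
    then show "x ^ (m * (i + n)) - x ^ (m * n - c) = (- (x ^ (m * n - c))) * (1 - x ^ (m * Suc i - (m - c)))"
      unfolding right_diff_distrib by (simp only: power_add) (simp add: algebra_simps)
  qed
  also have "\<dots> = (- (x ^ (m * n - c))) ^ n * (\<Prod>k=1..n. 1 - x ^ (m * k - (m - c)))"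
    by (simp only: prod.distrib prod_constant card_lessThan One_nat_def prod.atLeast1_atMost_eq)
  finally show ?thesis .
qed

definition pm_prod :: "nat \<Rightarrow> nat \<Rightarrow> nat \<Rightarrow> int fps" where
  "pm_prod m c n = (\<Prod>k=1..n. (1 - fps_X ^ (m * k - c)) * (1 - fps_X ^ (m * k - (m - c))))"

lemma prod_X_power_diff_eq_pm_prod:
  assumes "c \<le> m"
  shows "(\<Prod>i<2 * n. fps_X ^ (m * i) - fps_X ^ (m * n - c))
       = fps_X ^ (m * (n choose 2) + (m * n - c) * n) * ((-1) ^ n * pm_prod m c n)"
proof -
  define X :: "int fps" where "X = fps_X"
  have "(\<Prod>i<2 * n. X ^ (m * i) - X ^ (m * n - c))
      = (\<Prod>i<n. X ^ (m * i) - X ^ (m * n - c)) * (\<Prod>i<n. X ^ (m * (i + n)) - X ^ (m * n - c))"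
    unfolding mult_2 by (rule prod_lessThan_add)
  also have "\<dots> = X ^ (m * (n choose 2)) * (\<Prod>k=1..n. 1 - X ^ (m * k - c))
      * ((- (X ^ (m * n - c))) ^ n * (\<Prod>k=1..n. 1 - X ^ (m * k - (m - c))))"
    using assms by (simp only: prod_lower_half prod_upper_half)
  also have "(- (X ^ (m * n - c))) ^ n = (-1) ^ n * X ^ ((m * n - c) * n)"
    by (simp only: power_minus[of "X ^ (m * n - c)"] power_mult)
  also have "X ^ (m * (n choose 2)) * (\<Prod>k=1..n. 1 - X ^ (m * k - c))
      * ((-1) ^ n * X ^ ((m * n - c) * n) * (\<Prod>k=1..n. 1 - X ^ (m * k - (m - c))))
      = X ^ (m * (n choose 2) + (m * n - c) * n)
        * ((-1) ^ n * ((\<Prod>k=1..n. 1 - X ^ (m * k - c)) * (\<Prod>k=1..n. 1 - X ^ (m * k - (m - c)))))"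
    by (simp only: power_add ac_simps)
  also have "(\<Prod>k=1..n. 1 - X ^ (m * k - c)) * (\<Prod>k=1..n. 1 - X ^ (m * k - (m - c))) = pm_prod m c n"
    by (simp add: X_def pm_prod_def prod.distrib)
  finally show ?thesis
    by (simp only: X_def)
qed

lemma finite_jacobi_triple_product:
  assumes "0 < c" and "c < m"
  shows "pm_prod m c n = (\<Sum>k\<le>2 * n. (-1) ^ (n + k) * fps_X ^ theta_exp m c (int n - int k)
                                          * gauss_binom (fps_X ^ m) (2 * n) k)"
proof (cases "n = 0")
  case True
  then show ?thesis by (simp add: pm_prod_def)
next
  case False
  then have "m \<le> m * n" by simp
  then have "c \<le> m * n" using assms by linarith
  define X :: "int fps" where "X = fps_X"
  define M where "M = m * (n choose 2) + (m * n - c) * n"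
  let ?w = "- (X ^ (m * n - c))"
  \<comment> \<open>the \<open>q\<close>-binomial theorem at \<open>x = X^m\<close>, \<open>y = 1\<close>, \<open>w = -X^(mn - c)\<close>\<close>
  have summand: "(X ^ m) ^ (k choose 2) * gauss_binom (X ^ m) (2 * n) k * 1 ^ k * ?w ^ (2 * n - k)
      = X ^ M * ((-1) ^ k * X ^ theta_exp m c (int n - int k) * gauss_binom (X ^ m) (2 * n) k)"
    if "k \<le> 2 * n" for k
  proof -
    have "?w ^ (2 * n - k) = (-1) ^ k * X ^ ((m * n - c) * (2 * n - k))"
      using that by (simp only: power_minus[of "X ^ (m * n - c)"] power_mult) (simp add: minus_one_power_iff)
    moreover have "X ^ (m * (k choose 2)) * X ^ ((m * n - c) * (2 * n - k)) = X ^ M * X ^ theta_exp m c (int n - int k)"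
      using theta_exp_shift[OF assms that \<open>c \<le> m * n\<close>] by (simp add: M_def flip: power_add)
    ultimately show ?thesis
      unfolding power_mult[symmetric] power_one mult_1_right by (simp add: ac_simps)
  qed
  have "X ^ M * ((-1) ^ n * pm_prod m c n) = (\<Prod>i<2 * n. ?w + 1 * (X ^ m) ^ i)"
    using prod_X_power_diff_eq_pm_prod[OF less_imp_le[OF assms(2)], of n] by (simp add: X_def M_def power_mult)
  also have "\<dots> = X ^ M * (\<Sum>k\<le>2 * n. (-1) ^ k * X ^ theta_exp m c (int n - int k) * gauss_binom (X ^ m) (2 * n) k)"
    unfolding q_binomial sum_distrib_left by (rule sum.cong[OF refl], rule summand) simp
  finally have "(-1) ^ n * pm_prod m c n
      = (\<Sum>k\<le>2 * n. (-1) ^ k * X ^ theta_exp m c (int n - int k) * gauss_binom (X ^ m) (2 * n) k)"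
    by (simp add: X_def)
  then have "pm_prod m c n
      = (-1) ^ n * (\<Sum>k\<le>2 * n. (-1) ^ k * X ^ theta_exp m c (int n - int k) * gauss_binom (X ^ m) (2 * n) k)"
    by (metis left_minus_one_mult_self)
  then show ?thesis
    by (simp add: X_def sum_distrib_left power_add ac_simps)
qed

lemma sum_atMost_double_reindex: "(\<Sum>k\<le>2 * n. f (int n - int k)) = (\<Sum>j\<in>{-int n..int n}. f j)"
  by (rule sum.reindex_bij_witness[where i = "\<lambda>j. nat (int n - j)" and j = "\<lambda>k. int n - int k"]) auto

lemma minus_one_power_add_eq_abs_diff: "(-1 :: 'a::ring_1) ^ (n + k) = (-1) ^ nat \<bar>int n - int k\<bar>"
proof -
  have "even (n + k) \<longleftrightarrow> even (nat \<bar>int n - int k\<bar>)"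
    by (cases "k \<le> n") (simp_all add: even_diff_nat nat_diff_distrib' add.commute)
  then show ?thesis
    by (simp add: minus_one_power_iff)
qed

definition theta_sum :: "nat \<Rightarrow> nat \<Rightarrow> nat \<Rightarrow> int fps" where
  "theta_sum m c n = (\<Sum>j\<in>{-int n..int n}. (-1) ^ nat \<bar>j\<bar> * fps_X ^ theta_exp m c j)"

lemma theta_term_eq_upto:
  assumes "0 < c" and "c < m" and "2 * N \<le> n" and "k \<le> 2 * n"
  shows "fps_eq_upto N
           (fps_X ^ theta_exp m c (int n - int k) * (qpoch (fps_X ^ m) (2 * n) * gauss_binom (fps_X ^ m) (2 * n) k))
           (fps_X ^ theta_exp m c (int n - int k) :: int fps)"
proof (cases "N < theta_exp m c (int n - int k)")
  case True
  then have "fps_eq_upto N (fps_X ^ theta_exp m c (int n - int k) * h) (0 :: int fps)" for h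
    by (rule fps_eq_upto_X_power_mult)
  from this this[of 1] show ?thesis
    by (auto intro: fps_eq_upto_trans fps_eq_upto_sym)
next
  case False
  then have "\<bar>int n - int k\<bar> \<le> int N"
    using abs_le_theta_exp[OF assms(1,2), of "int n - int k"] by linarith
  then have "N \<le> k" and "N \<le> 2 * n - k"
    using assms(3,4) by auto
  then have "fps_eq_upto N (qpoch (fps_X ^ m) (2 * n) * gauss_binom (fps_X ^ m) (2 * n) k) (1 :: int fps)"
    using assms by (intro qpoch_gauss_binom_eq_upto) auto
  then show ?thesis
    using fps_eq_upto_mult[OF fps_eq_upto_refl] by fastforce
qed

lemma truncated_jacobi_triple_product:
  assumes "0 < c" and "c < m" and "2 * N \<le> n"
  shows "fps_eq_upto N (qpoch (fps_X ^ m) n * pm_prod m c n) (theta_sum m c n)"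
proof -
  let ?Q = "\<lambda>i. qpoch (fps_X ^ m :: int fps) i"
  let ?e = "\<lambda>k. theta_exp m c (int n - int k)"
  have "m \<ge> 1" and "N \<le> n" and "N \<le> 2 * n"
    using assms by simp_all
  then have "fps_eq_upto N (?Q n) (?Q N)" and "fps_eq_upto N (?Q (2 * n)) (?Q N)"
    by (simp_all add: qpoch_X_power_eq_upto)
  then have "fps_eq_upto N (?Q n) (?Q (2 * n))"
    by (blast intro: fps_eq_upto_sym fps_eq_upto_trans)
  then have "fps_eq_upto N (?Q n * pm_prod m c n) (?Q (2 * n) * pm_prod m c n)"
    by (rule fps_eq_upto_mult) simp
  also have "?Q (2 * n) * pm_prod m c n
      = (\<Sum>k\<le>2 * n. (-1) ^ (n + k) * (fps_X ^ ?e k * (?Q (2 * n) * gauss_binom (fps_X ^ m) (2 * n) k)))"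
    unfolding finite_jacobi_triple_product[OF assms(1,2)] sum_distrib_left by (simp add: ac_simps)
  also have "fps_eq_upto N \<dots> (\<Sum>k\<le>2 * n. (-1) ^ (n + k) * fps_X ^ ?e k)"
    using assms by (intro fps_eq_upto_sum fps_eq_upto_mult fps_eq_upto_refl theta_term_eq_upto) auto
  also have "\<dots> = (\<Sum>k\<le>2 * n. (\<lambda>j. (-1) ^ nat \<bar>j\<bar> * fps_X ^ theta_exp m c j) (int n - int k))"
    by (simp only: minus_one_power_add_eq_abs_diff)
  also have "\<dots> = theta_sum m c n"
    unfolding theta_sum_def by (rule sum_atMost_double_reindex)
  finally show ?thesis .
qed

lemma pm_prod_Suc:
  "pm_prod m c (Suc n) = pm_prod m c n * ((1 - fps_X ^ (m * Suc n - c)) * (1 - fps_X ^ (m * Suc n - (m - c))))"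
  by (simp add: pm_prod_def prod.nat_ivl_Suc')

lemma qpoch_split_mod_three:
  "qpoch (fps_X ^ (3 * m)) n * pm_prod (3 * m) m n = qpoch (fps_X ^ m :: int fps) (3 * n)"
proof (induction n)
  case 0
  then show ?case by (simp add: pm_prod_def)
next
  case (Suc n)
  let ?f = "\<lambda>i. 1 - fps_X ^ (m * i) :: int fps"
  have "3 * Suc n = Suc (Suc (Suc (3 * n)))" "3 * m * Suc n = m * Suc (Suc (Suc (3 * n)))"
    "3 * m * Suc n - m = m * Suc (Suc (3 * n))" "3 * m * Suc n - (3 * m - m) = m * Suc (3 * n)"
    by (simp_all add: algebra_simps)
  then have "qpoch (fps_X ^ (3 * m)) (Suc n) * pm_prod (3 * m) m (Suc n)
      = qpoch (fps_X ^ (3 * m)) n * pm_prod (3 * m) m n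
        * (?f (Suc (3 * n)) * ?f (Suc (Suc (3 * n))) * ?f (Suc (Suc (Suc (3 * n)))))"
    by (simp only: qpoch_Suc pm_prod_Suc flip: power_mult) (simp only: ac_simps)
  also have "\<dots> = qpoch (fps_X ^ m) (3 * Suc n)"
    unfolding Suc.IH \<open>3 * Suc n = _\<close> by (simp only: qpoch_Suc power_mult mult.assoc)
  finally show ?case .
qed

section \<open>Partitions into parts congruent to plus or minus c modulo m\<close>

definition partitions_in :: "nat set \<Rightarrow> nat \<Rightarrow> nat multiset set" where
  "partitions_in D n = {P. sum_mset P = n \<and> set_mset P \<subseteq> D}"

definition partition_fps :: "nat set \<Rightarrow> int fps" where
  "partition_fps D = Abs_fps (\<lambda>n. int (card (partitions_in D n)))"

lemma mset_member_le_sum_mset: "x \<in># P \<Longrightarrow> x \<le> sum_mset (P :: nat multiset)"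
  by (induction P) auto

lemma size_le_sum_mset: "0 \<notin># P \<Longrightarrow> size P \<le> sum_mset (P :: nat multiset)"
  by (induction P) (auto simp: Suc_le_eq)

lemma finite_partitions_in:
  assumes "0 \<notin> D"
  shows "finite (partitions_in D n)"
proof (rule finite_subset)
  show "partitions_in D n \<subseteq> (\<Union>s\<le>n. multisets_of_size {..n} s)"
  proof
    fix P assume "P \<in> partitions_in D n"
    then have sum: "sum_mset P = n" and "set_mset P \<subseteq> D"
      unfolding partitions_in_def by auto
    then have "size P \<le> n"
      using assms size_le_sum_mset by blast
    moreover have "set_mset P \<subseteq> {..n}"
      using mset_member_le_sum_mset sum by blast
    ultimately show "P \<in> (\<Union>s\<le>n. multisets_of_size {..n} s)"
      unfolding multisets_of_size_def by blast
  qed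
qed (intro finite_UN_I finite_atMost finite_multisets_of_size)

lemma partitions_in_containing:
  assumes "s \<in> D"
  shows "{P \<in> partitions_in D n. s \<in># P} = (if s \<le> n then add_mset s ` partitions_in D (n - s) else {})"
proof (cases "s \<le> n")
  case True
  have "{P \<in> partitions_in D n. s \<in># P} = add_mset s ` partitions_in D (n - s)"
  proof (intro equalityI subsetI)
    fix P assume P: "P \<in> {P \<in> partitions_in D n. s \<in># P}"
    then have "sum_mset P = s + sum_mset (P - {#s#})"
      by (simp add: sum_mset.remove)
    with P have "P = add_mset s (P - {#s#})" and "P - {#s#} \<in> partitions_in D (n - s)"
      unfolding partitions_in_def by (auto dest: in_diffD)
    then show "P \<in> add_mset s ` partitions_in D (n - s)"
      by blast
  next
    fix P assume "P \<in> add_mset s ` partitions_in D (n - s)"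
    then show "P \<in> {P \<in> partitions_in D n. s \<in># P}"
      using True assms unfolding partitions_in_def by auto
  qed
  with True show ?thesis by simp
next
  case False
  then show ?thesis
    unfolding partitions_in_def by (auto dest: mset_member_le_sum_mset)
qed

lemma card_partitions_in_insert:
  assumes "0 \<notin> D" and "0 < s" and "s \<notin> D"
  shows "card (partitions_in (insert s D) n)
       = card (partitions_in D n) + (if s \<le> n then card (partitions_in (insert s D) (n - s)) else 0)"
proof -
  let ?I = "partitions_in (insert s D)"
  let ?S = "{P \<in> ?I n. s \<in># P}"
  have split: "?I n = partitions_in D n \<union> ?S" and disjoint: "partitions_in D n \<inter> ?S = {}"
    using assms(3) unfolding partitions_in_def by auto
  have "finite (?I n)"
    using assms by (intro finite_partitions_in) auto
  moreover have "partitions_in D n \<subseteq> ?I n"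
    unfolding partitions_in_def by auto
  ultimately have "finite (partitions_in D n)" and "finite ?S"
    by (auto intro: finite_subset)
  have "card (?I n) = card (partitions_in D n \<union> ?S)"
    using split by (rule arg_cong)
  also have "\<dots> = card (partitions_in D n) + card ?S"
    by (rule card_Un_disjoint) fact+
  also have "card ?S = (if s \<le> n then card (?I (n - s)) else 0)"
    by (simp add: partitions_in_containing card_image inj_on_def)
  finally show ?thesis .
qed

lemma partition_fps_mult_prod:
  assumes "finite D" and "0 \<notin> D"
  shows "partition_fps D * (\<Prod>s\<in>D. 1 - fps_X ^ s) = 1"
  using assms
proof (induction D rule: finite_induct)
  case empty
  have "partitions_in {} n = (if n = 0 then {{#}} else {})" for n
    unfolding partitions_in_def by auto
  then have "partition_fps {} = 1"
    unfolding partition_fps_def by (intro fps_ext) simp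
  then show ?case by simp
next
  case (insert s D)
  then have "0 < s" by (cases s) auto
  have "partition_fps (insert s D) * (1 - fps_X ^ s) = partition_fps D"
  proof (rule fps_ext)
    fix n
    have "card (partitions_in (insert s D) n)
        = card (partitions_in D n) + (if s \<le> n then card (partitions_in (insert s D) (n - s)) else 0)"
      using insert.hyps(2) insert.prems \<open>0 < s\<close> by (intro card_partitions_in_insert) auto
    then show "(partition_fps (insert s D) * (1 - fps_X ^ s)) $ n = partition_fps D $ n"
      by (simp add: partition_fps_def algebra_simps fps_X_power_mult_nth not_less)
  qed
  then show ?case
    using insert by (simp add: mult.assoc[symmetric])
qed

definition pm_parts :: "nat \<Rightarrow> nat \<Rightarrow> nat \<Rightarrow> nat set" where
  "pm_parts m c K = (\<lambda>k. m * k - c) ` {1..K} \<union> (\<lambda>k. m * k - (m - c)) ` {1..K}"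

lemma mod_pm_parts_elements:
  fixes m c k :: nat
  assumes "0 < c" and "c < m" and "1 \<le> k"
  shows "(m * k - c) mod m = m - c" and "(m * k - (m - c)) mod m = c"
proof -
  obtain k' where k: "k = Suc k'"
    using assms(3) by (cases k) auto
  have residue: "(m * k' + r) mod m = r" if "r < m" for r
    using that by simp
  have "m * k - c = m * k' + (m - c)" and "m * k - (m - c) = m * k' + c"
    using assms(2) by (simp_all add: k)
  then show "(m * k - c) mod m = m - c" and "(m * k - (m - c)) mod m = c"
    using assms(1,2) by (simp_all only: residue diff_less)
qed

lemma pm_parts_mod:
  assumes "0 < c" and "c < m" and "x \<in> pm_parts m c K"
  shows "x mod m = c \<or> x mod m = m - c"
  using assms(3) mod_pm_parts_elements[OF assms(1,2)] unfolding pm_parts_def by auto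

lemma zero_notin_pm_parts:
  assumes "0 < c" and "c < m"
  shows "0 \<notin> pm_parts m c K"
proof
  assume "0 \<in> pm_parts m c K"
  then have "0 mod m = c \<or> 0 mod m = m - c"
    by (rule pm_parts_mod[OF assms])
  with assms show False
    by simp
qed

lemma mem_pm_parts_iff:
  assumes "0 < c" and "c < m" and "x < K"
  shows "x \<in> pm_parts m c K \<longleftrightarrow> x mod m = c \<or> x mod m = m - c"
proof
  assume "x \<in> pm_parts m c K"
  then show "x mod m = c \<or> x mod m = m - c"
    by (rule pm_parts_mod[OF assms(1,2)])
next
  assume x: "x mod m = c \<or> x mod m = m - c"
  define q where "q = x div m"
  have "q < K"
    unfolding q_def using assms(3) div_le_dividend le_less_trans by blast
  then have k: "Suc q \<in> {1..K}"
    by simp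
  have "x = m * q + x mod m"
    by (simp add: q_def)
  with x have "x = m * Suc q - (m - c) \<or> x = m * Suc q - c"
    using assms(2) by auto
  with k show "x \<in> pm_parts m c K"
    unfolding pm_parts_def by blast
qed

lemma prod_pm_parts:
  assumes "0 < c" and "c < m" and "2 * c \<noteq> m"
  shows "(\<Prod>s\<in>pm_parts m c K. 1 - fps_X ^ s) = pm_prod m c K"
proof -
  let ?A = "(\<lambda>k. m * k - c) ` {1..K}" and ?B = "(\<lambda>k. m * k - (m - c)) ` {1..K}"
  have inj: "inj_on (\<lambda>k. m * k - d) {1..K}" if "d \<le> m" for d
  proof (rule inj_onI)
    fix k k' assume "k \<in> {1..K}" "k' \<in> {1..K}" and eq: "m * k - d = m * k' - d"
    then have "m \<le> m * k" "m \<le> m * k'"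
      by simp_all
    with eq that have "m * k = m * k'"
      by linarith
    then show "k = k'"
      using assms(2) by simp
  qed
  have "?A \<inter> ?B = {}"
  proof (rule ccontr)
    assume "?A \<inter> ?B \<noteq> {}"
    then obtain x k k' where "k \<in> {1..K}" "x = m * k - c" and "k' \<in> {1..K}" "x = m * k' - (m - c)"
      by blast
    then have "x mod m = m - c" and "x mod m = c"
      by (metis atLeastAtMost_iff mod_pm_parts_elements[OF assms(1,2)])+
    with assms(2,3) show False
      by linarith
  qed
  then have "(\<Prod>s\<in>pm_parts m c K. 1 - fps_X ^ s) = (\<Prod>s\<in>?A. 1 - fps_X ^ s) * (\<Prod>s\<in>?B. 1 - fps_X ^ s)"
    unfolding pm_parts_def by (intro prod.union_disjoint) simp_all
  also have "(\<Prod>s\<in>?A. 1 - fps_X ^ s) = (\<Prod>k=1..K. 1 - fps_X ^ (m * k - c))"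
    using assms by (intro prod.reindex_cong[OF inj]) auto
  also have "(\<Prod>s\<in>?B. 1 - fps_X ^ s) = (\<Prod>k=1..K. 1 - fps_X ^ (m * k - (m - c)))"
    by (intro prod.reindex_cong[OF inj]) auto
  finally show ?thesis
    by (simp add: pm_prod_def prod.distrib)
qed

lemma pm_residue_iff:
  assumes "0 < c" and "c < m"
  shows "(0 < x \<and> (int x mod int m = int c mod int m \<or> int x mod int m = (- int c) mod int m))
     \<longleftrightarrow> x mod m = c \<or> x mod m = m - c"
proof -
  have "int c mod int m = int c" and "(- int c) mod int m = int (m - c)"
    using assms by (simp_all add: zmod_zminus1_eq_if of_nat_diff)
  moreover have "int x mod int m = int (x mod m)"
    by (simp add: of_nat_mod)
  ultimately show ?thesis
    using assms by (cases "x = 0") auto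
qed

lemma partitions_pm_eq_partitions_in:
  assumes "0 < c" and "c < m" and "n < K"
  shows "partitions_pm (int m) (int c) n = partitions_in (pm_parts m c K) n"
proof -
  have "x \<in> pm_parts m c K \<longleftrightarrow>
      0 < x \<and> (int x mod int m = int c mod int m \<or> int x mod int m = (- int c) mod int m)"
    if "x \<le> n" for x
    unfolding pm_residue_iff[OF assms(1,2)] using that assms by (intro mem_pm_parts_iff) auto
  then show ?thesis
    unfolding partitions_pm_def partitions_in_def using mset_member_le_sum_mset by blast
qed

lemma pcm_eq_nth_partition_fps:
  assumes "0 < c" and "c < m" and "i < K"
  shows "pcm (int m) (int c) (int i) = partition_fps (pm_parts m c K) $ i"
  using partitions_pm_eq_partitions_in[OF assms] by (simp add: pcm_def partition_fps_def)

lemma nth_partition_fps_mult_X_power: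
  assumes "0 < c" and "c < m" and "N < K"
  shows "(partition_fps (pm_parts m c K) * fps_X ^ e) $ N = pcm (int m) (int c) (int N - int e)"
proof (cases "e \<le> N")
  case True
  then have "pcm (int m) (int c) (int N - int e) = partition_fps (pm_parts m c K) $ (N - e)"
    using pcm_eq_nth_partition_fps[OF assms(1,2), of "N - e"] assms(3) by (simp add: of_nat_diff)
  with True show ?thesis
    by (simp add: fps_X_power_mult_right_nth)
qed (simp add: fps_X_power_mult_right_nth pcm_def)

section \<open>Comparing coefficients\<close>

lemma nth_partition_fps_mult_theta_sum:
  assumes "0 < c" and "c < m" and "N < K"
  shows "(partition_fps (pm_parts m c K) * theta_sum m c K) $ N
       = (\<Sum>j\<in>{-int K..int K}. (-1) ^ nat \<bar>j\<bar> * pcm (int m) (int c) (int N - int (theta_exp m c j)))"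
  unfolding theta_sum_def sum_distrib_left fps_sum_nth
proof (rule sum.cong[OF refl])
  fix j
  let ?F = "partition_fps (pm_parts m c K)"
  have "(?F * ((-1) ^ nat \<bar>j\<bar> * fps_X ^ theta_exp m c j)) $ N = (-1) ^ nat \<bar>j\<bar> * (?F * fps_X ^ theta_exp m c j) $ N"
    by (simp only: mult.left_commute[of ?F] minus_one_power_mult_nth)
  then show "(?F * ((-1) ^ nat \<bar>j\<bar> * fps_X ^ theta_exp m c j)) $ N
      = (-1) ^ nat \<bar>j\<bar> * pcm (int m) (int c) (int N - int (theta_exp m c j))"
    using assms by (simp add: nth_partition_fps_mult_X_power)
qed

lemma nth_theta_sum:
  "theta_sum m c K $ N = (\<Sum>j\<in>{-int K..int K}. if theta_exp m c j = N then (-1) ^ nat \<bar>j\<bar> else 0)"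
  by (auto simp: theta_sum_def fps_sum_nth minus_one_power_mult_nth intro!: sum.cong)

lemma alternating_pm_sum_eq_pentagonal_sum:
  assumes "0 < c" and "c < m" and "2 * c \<noteq> m" and "2 * N < K"
  shows "(\<Sum>j\<in>{-int K..int K}. (-1) ^ nat \<bar>j\<bar> * pcm (int m) (int c) (int N - int (theta_exp m c j)))
       = (\<Sum>j\<in>{-int K..int K}. if theta_exp (3 * m) m j = N then (-1) ^ nat \<bar>j\<bar> else 0)"
proof -
  define F where "F = partition_fps (pm_parts m c K)"
  let ?Q = "\<lambda>i. qpoch (fps_X ^ m :: int fps) i"
  have "finite (pm_parts m c K)"
    by (simp add: pm_parts_def)
  then have F_inverse: "F * pm_prod m c K = 1"
    unfolding F_def prod_pm_parts[OF assms(1-3), symmetric]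
    by (rule partition_fps_mult_prod[OF _ zero_notin_pm_parts[OF assms(1,2)]])
  have "m \<ge> 1" and "N \<le> K" and "N \<le> 3 * K" and "2 * N \<le> K"
    using assms by simp_all
  \<comment> \<open>both sides are the \<open>N\<close>-th coefficient of \<open>(X^m; X^m)\<^sub>K\<close>\<close>
  have "fps_eq_upto N (F * theta_sum m c K) (F * (?Q K * pm_prod m c K))"
    using assms by (intro fps_eq_upto_mult fps_eq_upto_refl fps_eq_upto_sym[OF truncated_jacobi_triple_product]) simp_all
  also have "F * (?Q K * pm_prod m c K) = ?Q K"
    using F_inverse by (simp add: mult.left_commute)
  also have "fps_eq_upto N \<dots> (?Q (3 * K))"
    using qpoch_X_power_eq_upto[OF \<open>m \<ge> 1\<close>] \<open>N \<le> K\<close> \<open>N \<le> 3 * K\<close>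
    by (blast intro: fps_eq_upto_trans fps_eq_upto_sym)
  also have "?Q (3 * K) = qpoch (fps_X ^ (3 * m)) K * pm_prod (3 * m) m K"
    by (rule qpoch_split_mod_three[symmetric])
  also have "fps_eq_upto N \<dots> (theta_sum (3 * m) m K)"
    using assms by (intro truncated_jacobi_triple_product) simp_all
  finally have "(F * theta_sum m c K) $ N = theta_sum (3 * m) m K $ N"
    by (simp add: fps_eq_upto_def)
  then show ?thesis
    using assms by (simp add: F_def nth_partition_fps_mult_theta_sum nth_theta_sum)
qed

lemma sum_symmetric_interval:
  "(\<Sum>j\<in>{-int K..int K}. f j) = f 0 + (\<Sum>j\<in>{1..int K}. f j + f (-j))"
proof (induction K)
  case (Suc K)
  have "{-int (Suc K)..int (Suc K)} = insert (int (Suc K)) (insert (- int (Suc K)) {-int K..int K})"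
    and "{1..int (Suc K)} = insert (int (Suc K)) {1..int K}"
    by auto
  with Suc show ?case
    by (simp add: algebra_simps)
qed simp

lemma alternating_pm_sum_fold:
  assumes "0 < c" and "c < m" and "N \<le> K"
  shows "(\<Sum>j\<in>{-int K..int K}. (-1) ^ nat \<bar>j\<bar> * pcm (int m) (int c) (int N - int (theta_exp m c j)))
       = pcm (int m) (int c) (int N) + (\<Sum>j = 1..int N. (-1) ^ nat j *
           (pcm (int m) (int c) (int N - (int m * j\<^sup>2 + (int m - 2 * int c) * j) div 2)
          + pcm (int m) (int c) (int N - (int m * j\<^sup>2 - (int m - 2 * int c) * j) div 2)))"
    (is "_ = _ + (\<Sum>j = 1..int N. ?r j)")
proof -
  define \<phi> where "\<phi> j = (-1) ^ nat \<bar>j\<bar> * pcm (int m) (int c) (int N - int (theta_exp m c j))" for j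
  have "(\<Sum>j\<in>{-int K..int K}. \<phi> j) = \<phi> 0 + (\<Sum>j\<in>{1..int K}. \<phi> j + \<phi> (-j))"
    by (rule sum_symmetric_interval)
  also have "(\<Sum>j\<in>{1..int K}. \<phi> j + \<phi> (-j)) = (\<Sum>j\<in>{1..int N}. \<phi> j + \<phi> (-j))"
  proof (rule sum.mono_neutral_right)
    show "\<forall>j\<in>{1..int K} - {1..int N}. \<phi> j + \<phi> (-j) = 0"
    proof
      fix j assume "j \<in> {1..int K} - {1..int N}"
      then have "int N < \<bar>j\<bar>" and "int N < \<bar>-j\<bar>"
        by auto
      then have "int N - int (theta_exp m c j) < 0" and "int N - int (theta_exp m c (-j)) < 0"
        using abs_le_theta_exp[OF assms(1,2), of j] abs_le_theta_exp[OF assms(1,2), of "-j"] by linarith+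
      then show "\<phi> j + \<phi> (-j) = 0"
        by (simp add: \<phi>_def pcm_def)
    qed
  qed (use assms(3) in auto)
  also have "(\<Sum>j\<in>{1..int N}. \<phi> j + \<phi> (-j)) = (\<Sum>j = 1..int N. ?r j)"
  proof (rule sum.cong[OF refl])
    fix j assume "j \<in> {1..int N}"
    moreover have "(int m * j\<^sup>2 + (int m - 2 * int c) * j) div 2 = int (theta_exp m c j)"
      and "(int m * j\<^sup>2 - (int m - 2 * int c) * j) div 2 = int (theta_exp m c (-j))"
      using two_theta_exp[OF assms(1,2), of j] two_theta_exp[OF assms(1,2), of "-j"] by simp_all
    ultimately show "\<phi> j + \<phi> (-j) = ?r j"
      by (simp add: \<phi>_def algebra_simps)
  qed
  finally show ?thesis
    by (simp add: \<phi>_def)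
qed

lemma pentagonal_eq_iff:
  fixes i j :: int
  shows "j * (3 * j - 1) div 2 = i * (3 * i - 1) div 2 \<longleftrightarrow> j = i"
proof
  assume "j * (3 * j - 1) div 2 = i * (3 * i - 1) div 2"
  moreover have "even (k * (3 * k - 1))" for k :: int
    by (cases "even k") auto
  ultimately have "j * (3 * j - 1) = i * (3 * i - 1)"
    by (metis dvd_div_mult_self)
  then have "(j - i) * (3 * (j + i) - 1) = 0"
    by (simp add: algebra_simps)
  moreover have "3 * (j + i) - 1 \<noteq> 0"
    by presburger
  ultimately show "j = i"
    by simp
qed simp

lemma minus_one_power_nat_abs: "(-1 :: 'a::ring_1) ^ nat \<bar>j\<bar> = (if even j then 1 else -1)"
proof -
  have "even (nat \<bar>j\<bar>) \<longleftrightarrow> even j"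
    using even_abs_add_iff[of j 0] by (simp add: even_nat_iff)
  then show ?thesis
    by (simp add: minus_one_power_iff)
qed

lemma pentagonal_indicator_sum:
  fixes m n :: int and S :: "int set"
  assumes "m \<noteq> 0" and "finite S" and "\<And>j. n = m * (j * (3 * j - 1) div 2) \<Longrightarrow> j \<in> S"
  shows "(\<Sum>j\<in>S. if n = m * (j * (3 * j - 1) div 2) then (-1 :: int) ^ nat \<bar>j\<bar> else 0)
       = (if \<exists>j. even j \<and> n = m * (j * (3 * j - 1) div 2) then 1
          else if \<exists>j. odd j \<and> n = m * (j * (3 * j - 1) div 2) then -1 else 0)"
proof (cases "\<exists>j. n = m * (j * (3 * j - 1) div 2)")
  case True
  then obtain j\<^sub>0 where j\<^sub>0: "n = m * (j\<^sub>0 * (3 * j\<^sub>0 - 1) div 2)"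
    by blast
  then have unique: "n = m * (j * (3 * j - 1) div 2) \<longleftrightarrow> j = j\<^sub>0" for j
    using assms(1) pentagonal_eq_iff by auto
  have "(\<Sum>j\<in>S. if n = m * (j * (3 * j - 1) div 2) then (-1 :: int) ^ nat \<bar>j\<bar> else 0) = (-1) ^ nat \<bar>j\<^sub>0\<bar>"
    using assms(2,3) j\<^sub>0 unfolding unique by simp
  also have "\<dots> = (if even j\<^sub>0 then 1 else -1)"
    by (rule minus_one_power_nat_abs)
  finally show ?thesis
    using unique by auto
qed auto

lemma theta_exp_pentagonal:
  assumes "1 \<le> m"
  shows "int (theta_exp (3 * m) m j) = int m * ((- j) * (3 * (- j) - 1) div 2)"
proof -
  have "even ((- j) * (3 * (- j) - 1))"
    by (cases "even j") auto
  then obtain t where t: "(- j) * (3 * (- j) - 1) = 2 * t"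
    by (rule evenE)
  have "2 * int (theta_exp (3 * m) m j) = int m * ((- j) * (3 * (- j) - 1))"
    using two_theta_exp[of m "3 * m" j] assms by (simp add: algebra_simps power2_eq_square)
  then show ?thesis
    unfolding t by simp
qed

lemma pentagonal_theta_sum:
  assumes "1 \<le> m" and "N \<le> K"
  shows "(\<Sum>j\<in>{-int K..int K}. if theta_exp (3 * m) m j = N then (-1 :: int) ^ nat \<bar>j\<bar> else 0)
       = (if \<exists>j::int. even j \<and> int N = int m * (j * (3 * j - 1) div 2) then 1
          else if \<exists>j::int. odd j \<and> int N = int m * (j * (3 * j - 1) div 2) then -1 else 0)"
    (is "_ = ?R")
proof -
  have iff: "theta_exp (3 * m) m (- j) = N \<longleftrightarrow> int N = int m * (j * (3 * j - 1) div 2)" for j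
    using theta_exp_pentagonal[OF assms(1), of "- j"] by auto
  have "(\<Sum>j\<in>{-int K..int K}. if theta_exp (3 * m) m j = N then (-1) ^ nat \<bar>j\<bar> else 0)
      = (\<Sum>j\<in>{-int K..int K}. if theta_exp (3 * m) m (- j) = N then (-1) ^ nat \<bar>- j\<bar> else 0)"
    by (rule sum.reindex_bij_witness[where i = uminus and j = uminus]) auto
  also have "\<dots> = (\<Sum>j\<in>{-int K..int K}. if int N = int m * (j * (3 * j - 1) div 2) then (-1) ^ nat \<bar>j\<bar> else 0)"
    unfolding iff abs_minus_cancel ..
  also have "\<dots> = ?R"
  proof (rule pentagonal_indicator_sum)
    fix j assume "int N = int m * (j * (3 * j - 1) div 2)"
    then have "\<bar>- j\<bar> \<le> int N"
      using abs_le_theta_exp[of m "3 * m" "- j"] iff[of j] assms(1) by simp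
    with assms(2) show "j \<in> {-int K..int K}"
      by auto
  qed (use assms(1) in simp_all)
  finally show ?thesis .
qed

theorem theorem8:
  fixes m c n :: int
  assumes "m \<ge> 1" and "0 < c" and "c < m" and "2 * c \<noteq> m" and "n \<ge> 0"
  shows "pcm m c n + (\<Sum>j = 1..n. (-1) ^ nat j *
           (pcm m c (n - (m * j^2 + (m - 2 * c) * j) div 2)
          + pcm m c (n - (m * j^2 - (m - 2 * c) * j) div 2)))
       = (if \<exists>j::int. even j \<and> n = m * (j * (3 * j - 1) div 2) then 1
          else if \<exists>j::int. odd j \<and> n = m * (j * (3 * j - 1) div 2) then -1
          else 0)"
proof -
  obtain M C N :: nat where MCN: "m = int M" "c = int C" "n = int N"
    using assms by (metis nonneg_int_cases less_imp_le order.trans zero_le_one)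
  with assms have "0 < C" "C < M" "2 * C \<noteq> M" "1 \<le> M"
    by linarith+
  define K where "K = 2 * N + 1"
  then have "2 * N < K" "N \<le> K"
    by simp_all
  show ?thesis
    unfolding MCN
    using alternating_pm_sum_fold[OF \<open>0 < C\<close> \<open>C < M\<close> \<open>N \<le> K\<close>]
      alternating_pm_sum_eq_pentagonal_sum[OF \<open>0 < C\<close> \<open>C < M\<close> \<open>2 * C \<noteq> M\<close> \<open>2 * N < K\<close>]
      pentagonal_theta_sum[OF \<open>1 \<le> M\<close> \<open>N \<le> K\<close>]
    by (simp only:)
qed

end
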